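(* Let $(P,\leq_1,\leq_2)$ be a finite weak plane poset. Then the relation $\ll$ on $P$ defined by $$x\ll y \iff (y\leq_1 x \text{ or } x\leq_2 y)$$ is a total order on $P$.
   Context: A double poset is a finite set $P$ equipped with two partial orders $\leq_1$ and $\leq_2$. A weak plane poset is a finite double poset $(P,\leq_1,\leq_2)$ such that: (1) for all $x,y\in P$, if $x\leq_1 y$ and $x\leq_2 y$ then $x=y$; (2) the relation $\preceq$ defined on $P$ by $x\preceq y \iff (x\leq_1 y \text{ or } x\leq_2 y)$ is a total quasi-order (i.e. reflexive, transitive, and any two elements are comparable; it need not be antisymmetric). *)

theory Defs
  imports Main
begin

definition double_poset :: "'a set \<Rightarrow> ('a \<times> 'a) set \<Rightarrow> ('a \<times> 'a) set \<Rightarrow> bool" where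
  "double_poset P le1 le2 \<longleftrightarrow> partial_order_on P le1 \<and> partial_order_on P le2"

definition weak_plane_poset :: "'a set \<Rightarrow> ('a \<times> 'a) set \<Rightarrow> ('a \<times> 'a) set \<Rightarrow> bool" where
  "weak_plane_poset P le1 le2 \<longleftrightarrow>
     double_poset P le1 le2 \<and>
     (\<forall>x\<in>P. \<forall>y\<in>P. (x, y) \<in> le1 \<and> (x, y) \<in> le2 \<longrightarrow> x = y) \<and>
     preorder_on P (le1 \<union> le2) \<and> total_on P (le1 \<union> le2)"

end

theory Submission
  imports Defs
begin

text \<open>Write \<open>x \<ll> y\<close> for \<open>(x, y) \<in> le1\<inverse> \<union> le2\<close>. Composing two \<open>\<ll>\<close>-steps of the same kind is
  transitivity of \<open>le1\<close> or \<open>le2\<close>. For a mixed pair \<open>y \<le>\<^sub>1 x\<close>, \<open>y \<le>\<^sub>2 z\<close>, compare \<open>x\<close> and \<open>z\<close>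
  by totality: two of the four outcomes give \<open>x \<ll> z\<close> directly, while \<open>x \<le>\<^sub>1 z\<close> or \<open>z \<le>\<^sub>2 x\<close>
  would make \<open>y\<close> comparable to \<open>z\<close> resp. \<open>x\<close> in both orders, forcing equality. The other mixed
  pair is the same situation for the converse orders. Antisymmetry is immediate from the
  hypothesis that no two distinct elements are comparable in both orders.\<close>

lemma converse_Un_mixed_step:
  assumes "trans le1" "trans le2"
    and only_equal_in_both: "\<And>u v. (u, v) \<in> le1 \<Longrightarrow> (u, v) \<in> le2 \<Longrightarrow> u = v"
    and yx: "(y, x) \<in> le1" and yz: "(y, z) \<in> le2"
    and comparable: "(x, z) \<in> le1 \<or> (z, x) \<in> le1 \<or> (x, z) \<in> le2 \<or> (z, x) \<in> le2"
  shows "(x, z) \<in> le1\<inverse> \<union> le2"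
  using comparable
proof (elim disjE)
  assume "(x, z) \<in> le1"
  with yx \<open>trans le1\<close> have "(y, z) \<in> le1" by (blast dest: transD)
  with yz only_equal_in_both have "y = z" by blast
  with yx show ?thesis by simp
next
  assume "(z, x) \<in> le2"
  with yz \<open>trans le2\<close> have "(y, x) \<in> le2" by (blast dest: transD)
  with yx only_equal_in_both have "y = x" by blast
  with yz show ?thesis by simp
qed auto

lemma trans_converse_Un:
  assumes "preorder_on P le1" "preorder_on P le2"
    and only_equal_in_both: "\<And>u v. (u, v) \<in> le1 \<Longrightarrow> (u, v) \<in> le2 \<Longrightarrow> u = v"
    and "total_on P (le1 \<union> le2)"
  shows "trans (le1\<inverse> \<union> le2)"
proof (rule transI)
  fix x y z
  assume xy: "(x, y) \<in> le1\<inverse> \<union> le2" and yz: "(y, z) \<in> le1\<inverse> \<union> le2"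
  have trans1: "trans le1" and trans2: "trans le2"
    using assms(1,2) by (simp_all add: preorder_on_def)
  have "x \<in> P" "z \<in> P"
    using xy yz assms(1,2) by (auto simp: preorder_on_def refl_on_def)
  show "(x, z) \<in> le1\<inverse> \<union> le2"
  proof (cases "x = z")
    case True
    with \<open>x \<in> P\<close> assms(2) show ?thesis by (auto simp: preorder_on_def refl_on_def)
  next
    case False
    with \<open>x \<in> P\<close> \<open>z \<in> P\<close> \<open>total_on P (le1 \<union> le2)\<close>
    have comparable: "(x, z) \<in> le1 \<or> (z, x) \<in> le1 \<or> (x, z) \<in> le2 \<or> (z, x) \<in> le2"
      by (auto simp: total_on_def)
    have "(x, z) \<in> le1\<inverse> \<union> le2" if "(y, x) \<in> le1" "(y, z) \<in> le2"
      using converse_Un_mixed_step[OF trans1 trans2 only_equal_in_both that comparable] .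
    moreover have "(x, z) \<in> le1\<inverse> \<union> le2" if "(x, y) \<in> le2" "(z, y) \<in> le1"
    proof -
      have "(x, z) \<in> (le2\<inverse>)\<inverse> \<union> le1\<inverse>"
      proof (rule converse_Un_mixed_step)
        show "trans (le2\<inverse>)" "trans (le1\<inverse>)"
          using trans1 trans2 by simp_all
        show "u = v" if "(u, v) \<in> le2\<inverse>" "(u, v) \<in> le1\<inverse>" for u v
          using only_equal_in_both that by auto
      qed (use that comparable in auto)
      then show ?thesis by auto
    qed
    moreover have "(x, z) \<in> le1\<inverse>" if "(y, x) \<in> le1" "(z, y) \<in> le1"
      using that trans1 by (blast dest: transD)
    moreover have "(x, z) \<in> le2" if "(x, y) \<in> le2" "(y, z) \<in> le2"
      using that trans2 by (blast dest: transD)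
    ultimately show ?thesis
      using xy yz by blast
  qed
qed

lemma linear_order_on_converse_Un:
  assumes "partial_order_on P le1" "partial_order_on P le2"
    and only_equal_in_both: "\<And>u v. (u, v) \<in> le1 \<Longrightarrow> (u, v) \<in> le2 \<Longrightarrow> u = v"
    and total: "total_on P (le1 \<union> le2)"
  shows "linear_order_on P (le1\<inverse> \<union> le2)"
proof -
  have pre1: "preorder_on P le1" and pre2: "preorder_on P le2"
    and "antisym le1" "antisym le2"
    using assms(1,2) by (simp_all add: partial_order_on_def)
  have "le1\<inverse> \<union> le2 \<subseteq> P \<times> P" "refl_on P (le1\<inverse> \<union> le2)"
    using pre1 pre2 by (auto simp: preorder_on_def refl_on_def)
  moreover have "trans (le1\<inverse> \<union> le2)"
    using trans_converse_Un[OF pre1 pre2 only_equal_in_both total] .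
  moreover have "antisym (le1\<inverse> \<union> le2)"
    using \<open>antisym le1\<close> \<open>antisym le2\<close> only_equal_in_both unfolding antisym_def by (metis UnE converseD)
  moreover have "total_on P (le1\<inverse> \<union> le2)"
    using total by (auto simp: total_on_def)
  ultimately show ?thesis
    by (simp add: linear_order_on_def partial_order_on_def preorder_on_def)
qed

theorem mainTheorem1:
  fixes P :: "'a set" and le1 le2 :: "('a \<times> 'a) set"
  assumes "finite P" and "weak_plane_poset P le1 le2"
  shows "linear_order_on P {(x, y). (y, x) \<in> le1 \<or> (x, y) \<in> le2}"
proof -
  have orders: "partial_order_on P le1" "partial_order_on P le2"
    and total: "total_on P (le1 \<union> le2)"
    and only_equal_in_both: "\<And>u v. (u, v) \<in> le1 \<Longrightarrow> (u, v) \<in> le2 \<Longrightarrow> u = v"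
    using assms(2)
    by (auto simp: weak_plane_poset_def double_poset_def partial_order_on_def
        preorder_on_def refl_on_def)
  have "{(x, y). (y, x) \<in> le1 \<or> (x, y) \<in> le2} = le1\<inverse> \<union> le2"
    by auto
  then show ?thesis
    using linear_order_on_converse_Un[OF orders only_equal_in_both total] by simp
qed

end
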